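(* Let $Y,Z$ be random variables with standard alphabets $(A_Y,\mathcal B_{A_Y})$, $(A_Z,\mathcal B_{A_Z})$, let $T:A_Y\times A_Z\to A_X$ be measurable with $(A_X,\mathcal B_{A_X})$ standard, and let $X=T(Y,Z)$. Partition $A_Z=A_Z^0\cup A_Z^{\mathrm{atomic}}\cup A_Z^{\mathrm{continuous}}$, where $A_Z^0$ is the set of $z$ for which $P_{X_z}=\mathbb P(X\in\cdot\,|Z=z)$ is concentrated on a single point; $A_Z^{\mathrm{atomic}}$ is the set of $z$ for which $P_{X_z}(B_X)=1$ for some at most countable, non-singleton $B_X\in\mathcal B_{A_X}$ (and $P_{X_z}$ is not concentrated on a single point); and $A_Z^{\mathrm{continuous}}$ is the set of $z$ for which there is $B_X\in\mathcal B_{A_X}$ with $P_{X_z}(B_X)>0$ and $P_{X_z}(\{x\})=0$ for all $x\in B_X$. Then \[I(X;Y|Z)=\begin{cases}\displaystyle\int_{A_Z^{\mathrm{atomic}}}I(X_z;Y_z)\,\mathrm dP_Z(z) & \text{if } P_Z(A_Z^{\mathrm{continuous}})=0,\\ \infty & \text{otherwise.}\end{cases}\] In particular, if $P_Z(A_Z^0)=1$ then $I(X;Y|Z)=0$.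
   Context: $P_f$ denotes the distribution of a random variable $f$. A standard measurable space is one isomorphic via a bi-measurable bijection to a Borel subset of a Polish space (so regular conditional probabilities and disintegrations exist). $\mathrm{KL}(P\|M)=\int\ln\frac{\mathrm dP}{\mathrm dM}\,\mathrm dP$ if $P\ll M$ and $\infty$ otherwise; $I(X;Y)=\mathrm{KL}(P_{XY}\|P_X\otimes P_Y)$. The measure $P_{X\times Y|Z}$ is defined by $P_{X\times Y|Z}(B_X\times B_Y\times B_Z)=\int_{B_Z}\mathbb P(X\in B_X|Z=z)\mathbb P(Y\in B_Y|Z=z)\,\mathrm dP_Z(z)$ with regular conditional distributions, and $I(X;Y|Z)=\mathrm{KL}(P_{XYZ}\|P_{X\times Y|Z})$. For $z\in A_Z$, the $Z$-conditioned random variables $X_z,Y_z$ have joint distribution $(P_{XYZ})_z$, the disintegration of $P_{XYZ}$ with respect to $P_Z$, i.e. $(P_{XYZ})_z(B_X\times B_Y)=\mathbb P(X\in B_X,Y\in B_Y|Z=z)$; their marginals are $P_{X_z}=\mathbb P(X\in\cdot|Z=z)$ and $P_{Y_z}=\mathbb P(Y\in\cdot|Z=z)$. (For instance, with transfer entropy $T_{U\to V,t}=I(V_{t+1};U_t|V_t)$ and $V_{t+1}=T(U_t,V_t)$, this gives $T_{U\to V,t}=\infty$ whenever $\mathbb P(V_{t+1}\in\cdot|V_t=v)$ charges an atomless continuum for a positive-measure set of $v$.) *)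

theory Defs
  imports "HOL-Probability.Probability"
begin

text \<open>Standard measurable space: bi-measurable bijection onto a Borel subset of a Polish
  space. The Polish space is represented by a type of class polish_space; in the main
  theorem the type is a free (hence effectively existentially quantified) type variable.\<close>
definition standard_via :: "'a measure \<Rightarrow> ('a \<Rightarrow> 'p::polish_space) \<Rightarrow> bool" where
  "standard_via M f \<longleftrightarrow>
     f ` space M \<in> sets (borel :: 'p measure) \<and>
     bij_betw f (space M) (f ` space M) \<and>
     f \<in> M \<rightarrow>\<^sub>M borel \<and>
     the_inv_into (space M) f \<in> restrict_space borel (f ` space M) \<rightarrow>\<^sub>M M"

definition KL :: "'a measure \<Rightarrow> 'a measure \<Rightarrow> ereal" where
  "KL P Q =
    (if sets P = sets Q \<and> absolutely_continuous Q P then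
       enn2ereal (\<integral>\<^sup>+ x. ennreal (max 0 (ln (enn2real (RN_deriv Q P x)))) \<partial>P)
       - enn2ereal (\<integral>\<^sup>+ x. ennreal (max 0 (- ln (enn2real (RN_deriv Q P x)))) \<partial>P)
     else \<infinity>)"

definition MI :: "'x measure \<Rightarrow> 'y measure \<Rightarrow> ('x \<times> 'y) measure \<Rightarrow> ereal" where
  "MI MX MY J = KL J (distr J MX fst \<Otimes>\<^sub>M distr J MY snd)"

text \<open>P_{X x Y | Z} built from the conditional law kernel K (z |-> law of (X,Y) given Z = z)
  and the law PZ of Z: rectangles BX x BY x BZ get mass int_BZ K_X(z)(BX) K_Y(z)(BY) dPZ.\<close>
definition cond_prod_measure ::
  "'x measure \<Rightarrow> 'y measure \<Rightarrow> 'z measure \<Rightarrow> 'z measure \<Rightarrow> ('z \<Rightarrow> ('x \<times> 'y) measure)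
     \<Rightarrow> (('x \<times> 'y) \<times> 'z) measure" where
  "cond_prod_measure MX MY MZ PZ K =
     PZ \<bind> (\<lambda>z. distr (distr (K z) MX fst \<Otimes>\<^sub>M distr (K z) MY snd)
                        ((MX \<Otimes>\<^sub>M MY) \<Otimes>\<^sub>M MZ) (\<lambda>xy. (xy, z)))"

end

theory Submission
  imports Defs
begin

(* Since X = T(Y,Z), conditionally on Z = z the pair (X,Y) lives on the graph of y \<mapsto> T(y,z),
   and the product P_{X_z} \<otimes> P_{Y_z} of its marginals gives that graph the mass
   P_{X_z}{T(y,z)} above each y. Hence P_{X_z Y_z} has a density with respect to this product
   exactly when P_{X_z} is purely atomic, namely 1/P_{X_z}{x} on the graph, and then
   I(X_z;Y_z) = E[-ln P_{X_z}{X_z}], which vanishes for a point mass. Gluing these densities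
   over z gives the density of P_XYZ with respect to P_{X\<times>Y|Z}. If the continuous parts are
   charged for a P_Z-positive set of z, the graph points without atom form a set that is null
   for P_{X\<times>Y|Z} but not for P_XYZ, so the divergence is infinite. *)

lemma sets_eq_standard_via:
  assumes std: "standard_via MX (fX :: 'x \<Rightarrow> 'p::polish_space)"
    and f: "f \<in> N \<rightarrow>\<^sub>M MX" and g: "g \<in> N \<rightarrow>\<^sub>M MX"
  shows "{w \<in> space N. f w = g w} \<in> sets N"
proof -
  have fX: "fX \<in> MX \<rightarrow>\<^sub>M borel" and inj: "inj_on fX (space MX)"
    using std unfolding standard_via_def bij_betw_def by auto
  have "{w \<in> space N. f w = g w} = {w \<in> space N. fX (f w) = fX (g w)}"
    using inj measurable_space[OF f] measurable_space[OF g] by (auto dest: inj_onD)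
  also have "\<dots> \<in> sets N"
    by (rule measurable_equality_set) (auto intro: measurable_compose[OF f fX] measurable_compose[OF g fX])
  finally show ?thesis .
qed

lemma pred_eq_standard_via:
  "standard_via MX (fX :: 'x \<Rightarrow> 'p::polish_space) \<Longrightarrow> f \<in> N \<rightarrow>\<^sub>M MX \<Longrightarrow> g \<in> N \<rightarrow>\<^sub>M MX \<Longrightarrow>
    Measurable.pred N (\<lambda>w. f w = g w)"
  unfolding pred_def by (rule sets_eq_standard_via)

lemma singleton_sets_standard_via:
  assumes std: "standard_via MX (fX :: 'x \<Rightarrow> 'p::polish_space)" and x: "x \<in> space MX"
  shows "{x} \<in> sets MX"
proof -
  have "{w \<in> space MX. w = x} \<in> sets MX"
    by (rule sets_eq_standard_via[OF std]) (use x in auto)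
  also have "{w \<in> space MX. w = x} = {x}" using x by auto
  finally show ?thesis .
qed

lemma measurable_emeasure_singleton_kernel:
  assumes std: "standard_via MX (fX :: 'x \<Rightarrow> 'p::polish_space)"
    and L[measurable]: "L \<in> N \<rightarrow>\<^sub>M subprob_algebra MX"
  shows "(\<lambda>(z, x). emeasure (L z) {x}) \<in> borel_measurable (N \<Otimes>\<^sub>M MX)"
proof -
  have "(\<lambda>w. \<integral>\<^sup>+ x'. indicator {x'. x' = snd w} x' \<partial>L (fst w)) \<in> borel_measurable (N \<Otimes>\<^sub>M MX)"
  proof (rule nn_integral_measurable_subprob_algebra2[where N=MX])
    have "Measurable.pred ((N \<Otimes>\<^sub>M MX) \<Otimes>\<^sub>M MX) (\<lambda>p. snd p = snd (fst p))"
      by (rule pred_eq_standard_via[OF std]) measurable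
    then show "(\<lambda>(w, x'). indicator {x'. x' = snd w} x' :: ennreal) \<in> borel_measurable ((N \<Otimes>\<^sub>M MX) \<Otimes>\<^sub>M MX)"
      by (simp add: indicator_def case_prod_beta')
  qed measurable
  then show ?thesis
  proof (rule measurable_cong[THEN iffD1, rotated])
    fix w assume "w \<in> space (N \<Otimes>\<^sub>M MX)"
    then have "snd w \<in> space MX" "fst w \<in> space N" by (auto simp: space_pair_measure)
    moreover have "sets (L (fst w)) = sets MX"
      using measurable_space[OF L \<open>fst w \<in> space N\<close>] by (simp add: space_subprob_algebra)
    ultimately show "(\<integral>\<^sup>+ x'. indicator {x'. x' = snd w} x' \<partial>L (fst w)) = (case w of (z, x) \<Rightarrow> emeasure (L z) {x})"
      using singleton_sets_standard_via[OF std] by (cases w) auto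
  qed
qed

lemma measurable_emeasure_singleton:
  assumes std: "standard_via MX (fX :: 'x \<Rightarrow> 'p::polish_space)"
    and \<mu>: "subprob_space \<mu>" "sets \<mu> = sets MX"
  shows "(\<lambda>x. emeasure \<mu> {x}) \<in> borel_measurable MX"
proof -
  have "(\<lambda>_. \<mu>) \<in> count_space UNIV \<rightarrow>\<^sub>M subprob_algebra MX"
    using \<mu> by (intro measurable_const) (auto simp: space_subprob_algebra)
  from measurable_Pair2[OF measurable_emeasure_singleton_kernel[OF std this], of "()"]
  show ?thesis by simp
qed

lemma (in prob_space) emeasure_null_atoms_countable_support:
  assumes B: "B \<in> sets M" "countable B" "emeasure M B = 1" "\<And>x. x \<in> B \<Longrightarrow> {x} \<in> sets M"
    and C: "C \<in> sets M" "\<And>x. x \<in> C \<Longrightarrow> emeasure M {x} = 0"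
  shows "emeasure M C = 0"
proof -
  have "(\<Union>x\<in>C \<inter> B. {x}) \<in> null_sets M"
    using B C by (intro null_sets_UN') (auto simp: null_sets_def)
  moreover have "space M - B \<in> null_sets M"
    using B by (simp add: null_sets_def emeasure_compl emeasure_space_1)
  ultimately have "(C \<inter> B) \<union> (space M - B) \<in> null_sets M" by auto
  moreover have "C \<subseteq> (C \<inter> B) \<union> (space M - B)" using sets.sets_into_space[OF C(1)] by auto
  ultimately show ?thesis using C(1) by (meson null_sets_subset null_setsD1)
qed

lemma (in prob_space) atoms_countable_support:
  assumes null: "{x \<in> space M. emeasure M {x} = 0} \<in> null_sets M"
  shows "countable {x \<in> space M. emeasure M {x} \<noteq> 0}"
    and "{x \<in> space M. emeasure M {x} \<noteq> 0} \<in> sets M"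
    and "emeasure M {x \<in> space M. emeasure M {x} \<noteq> 0} = 1"
proof -
  have eq: "{x \<in> space M. emeasure M {x} \<noteq> 0} = space M - {x \<in> space M. emeasure M {x} = 0}"
    by auto
  show "countable {x \<in> space M. emeasure M {x} \<noteq> 0}"
    by (rule countable_subset[OF _ countable_support]) (auto simp: emeasure_eq_measure)
  show "{x \<in> space M. emeasure M {x} \<noteq> 0} \<in> sets M" unfolding eq using null by auto
  show "emeasure M {x \<in> space M. emeasure M {x} \<noteq> 0} = 1"
    unfolding eq using null by (simp add: emeasure_compl emeasure_space_1 null_sets_def)
qed

lemma (in prob_space) AE_eq_point_mass:
  assumes "{x0} \<in> sets M" "emeasure M {x0} = 1"
  shows "AE x in M. x = x0"
  using assms AE_in_set_eq_1[of "{x0}"] by (simp add: emeasure_eq_measure)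

(* The bound c \<le> 1 makes the log-density nonnegative, so only the positive part in KL_def counts. *)
lemma KL_density_inverse:
  assumes Nq: "prob_space Nq" and sets_eq: "sets Np = sets Nq" and dens: "density Nq g = Np"
    and g: "g \<in> borel_measurable Nq"
    and ae: "AE w in Np. g w = inverse (c w) \<and> 0 < c w \<and> c w \<le> 1"
  shows "KL Np Nq = enn2ereal (\<integral>\<^sup>+ w. ennreal (- ln (enn2real (c w))) \<partial>Np)"
proof -
  interpret Q: prob_space Nq by (rule Nq)
  have ac: "absolutely_continuous Nq Np"
    using absolutely_continuousI_density[OF g] dens by simp
  have "AE w in Nq. g w = RN_deriv Nq Np w"
    by (rule Q.RN_deriv_unique[OF g dens])
  then have "AE w in Np. g w = RN_deriv Nq Np w"
    by (rule absolutely_continuous_AE[OF sets_eq ac])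
  then have log_RN: "AE w in Np. max 0 (ln (enn2real (RN_deriv Nq Np w))) = - ln (enn2real (c w))
       \<and> max 0 (- ln (enn2real (RN_deriv Nq Np w))) = 0"
    using ae
  proof eventually_elim
    fix w assume "g w = RN_deriv Nq Np w" and c: "g w = inverse (c w) \<and> 0 < c w \<and> c w \<le> 1"
    then have R: "RN_deriv Nq Np w = inverse (c w)" by simp
    from c obtain r where r: "c w = ennreal r" "0 < r" "r \<le> 1"
      by (cases "c w" rule: ennreal_cases) (auto simp: top_unique)
    then have "enn2real (RN_deriv Nq Np w) = inverse r" unfolding R by (simp add: inverse_ennreal)
    with r show "max 0 (ln (enn2real (RN_deriv Nq Np w))) = - ln (enn2real (c w))
       \<and> max 0 (- ln (enn2real (RN_deriv Nq Np w))) = 0"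
      by (simp add: ln_inverse)
  qed
  have "(\<integral>\<^sup>+ w. ennreal (max 0 (ln (enn2real (RN_deriv Nq Np w)))) \<partial>Np)
      = (\<integral>\<^sup>+ w. ennreal (- ln (enn2real (c w))) \<partial>Np)"
    by (rule nn_integral_cong_AE) (use log_RN in \<open>eventually_elim, simp\<close>)
  moreover have "(\<integral>\<^sup>+ w. ennreal (max 0 (- ln (enn2real (RN_deriv Nq Np w)))) \<partial>Np) = (\<integral>\<^sup>+ w. 0 \<partial>Np)"
    by (rule nn_integral_cong_AE) (use log_RN in \<open>eventually_elim, simp\<close>)
  ultimately show ?thesis
    unfolding KL_def using sets_eq ac by (simp add: zero_ennreal.rep_eq)
qed

definition graph_density :: "'x measure \<Rightarrow> ('y \<Rightarrow> 'x) \<Rightarrow> 'x \<times> 'y \<Rightarrow> ennreal" where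
  "graph_density \<mu>X t xy =
     (if fst xy = t (snd xy) \<and> emeasure \<mu>X {fst xy} \<noteq> 0 then inverse (emeasure \<mu>X {fst xy}) else 0)"

lemma measurable_graph_density:
  assumes std: "standard_via MX (fX :: 'x \<Rightarrow> 'p::polish_space)"
    and \<mu>X: "subprob_space \<mu>X" "sets \<mu>X = sets MX" and t[measurable]: "t \<in> MY \<rightarrow>\<^sub>M MX"
  shows "graph_density \<mu>X t \<in> borel_measurable (MX \<Otimes>\<^sub>M MY)"
proof -
  note [measurable] = measurable_emeasure_singleton[OF std \<mu>X] pred_eq_standard_via[OF std]
  show ?thesis unfolding graph_density_def by measurable
qed

lemma nn_integral_graph_density_section:
  assumes "finite_measure \<mu>X" and "{t y} \<in> sets \<mu>X"
  shows "(\<integral>\<^sup>+ x. graph_density \<mu>X t (x, y) * indicator A (x, y) \<partial>\<mu>X)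
    = (if emeasure \<mu>X {t y} \<noteq> 0 then indicator A (t y, y) else 0)"
proof -
  let ?c = "if emeasure \<mu>X {t y} \<noteq> 0 then inverse (emeasure \<mu>X {t y}) * indicator A (t y, y) else 0"
  have "(\<integral>\<^sup>+ x. graph_density \<mu>X t (x, y) * indicator A (x, y) \<partial>\<mu>X) = (\<integral>\<^sup>+ x. ?c * indicator {t y} x \<partial>\<mu>X)"
    by (rule nn_integral_cong) (auto simp: graph_density_def indicator_def)
  also have "\<dots> = ?c * emeasure \<mu>X {t y}"
    using assms(2) by (simp add: nn_integral_cmult_indicator)
  also have "\<dots> = (if emeasure \<mu>X {t y} \<noteq> 0 then indicator A (t y, y) else 0)"
    using ennreal_divide_self[of "emeasure \<mu>X {t y}"] finite_measure.emeasure_finite[OF assms(1), of "{t y}"]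
    by (auto simp: divide_ennreal_def mult_ac less_top[symmetric])
  finally show ?thesis .
qed

lemma emeasure_pair_graph_null_atoms:
  assumes std: "standard_via MX (fX :: 'x \<Rightarrow> 'p::polish_space)"
    and \<mu>X: "prob_space \<mu>X" "sets \<mu>X = sets MX" and \<mu>Y: "prob_space \<mu>Y" "sets \<mu>Y = sets MY"
    and t[measurable]: "t \<in> MY \<rightarrow>\<^sub>M MX"
  shows "emeasure (\<mu>X \<Otimes>\<^sub>M \<mu>Y) {xy \<in> space (MX \<Otimes>\<^sub>M MY). fst xy = t (snd xy) \<and> emeasure \<mu>X {fst xy} = 0} = 0"
proof -
  interpret pair_sigma_finite \<mu>X \<mu>Y
    using \<mu>X \<mu>Y by (intro pair_sigma_finite.intro prob_space_imp_sigma_finite)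
  note [measurable] = measurable_emeasure_singleton[OF std prob_space_imp_subprob_space[OF \<mu>X(1)] \<mu>X(2)]
    pred_eq_standard_via[OF std]
  let ?N = "{xy \<in> space (MX \<Otimes>\<^sub>M MY). fst xy = t (snd xy) \<and> emeasure \<mu>X {fst xy} = 0}"
  have "?N \<in> sets (\<mu>X \<Otimes>\<^sub>M \<mu>Y)"
    using \<mu>X \<mu>Y by (simp add: sets_pair_measure_cong[of \<mu>X MX \<mu>Y MY])
  then have "emeasure (\<mu>X \<Otimes>\<^sub>M \<mu>Y) ?N = (\<integral>\<^sup>+ y. emeasure \<mu>X ((\<lambda>x. (x, y)) -` ?N) \<partial>\<mu>Y)"
    by (rule emeasure_pair_measure_alt2)
  also have "\<dots> = (\<integral>\<^sup>+ y. 0 \<partial>\<mu>Y)"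
  proof (rule nn_integral_cong)
    fix y assume "y \<in> space \<mu>Y"
    then have y: "y \<in> space MY" using \<mu>Y(2) sets_eq_imp_space_eq by blast
    then have "(\<lambda>x. (x, y)) -` ?N = (if emeasure \<mu>X {t y} = 0 then {t y} else {})"
      using measurable_space[OF t y] by (auto simp: space_pair_measure)
    then show "emeasure \<mu>X ((\<lambda>x. (x, y)) -` ?N) = 0" by simp
  qed
  finally show ?thesis by simp
qed

lemma AE_fst_atom_nonzero:
  assumes std: "standard_via MX (fX :: 'x \<Rightarrow> 'p::polish_space)"
    and \<mu>: "prob_space \<mu>" "sets \<mu> = sets (MX \<Otimes>\<^sub>M MY)"
    and atoms: "emeasure (distr \<mu> MX fst) {x \<in> space MX. emeasure (distr \<mu> MX fst) {x} = 0} = 0"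
  shows "AE xy in \<mu>. emeasure (distr \<mu> MX fst) {fst xy} \<noteq> 0"
proof -
  let ?\<mu>X = "distr \<mu> MX fst"
  have fst_meas[measurable]: "fst \<in> \<mu> \<rightarrow>\<^sub>M MX" by (simp add: measurable_cong_sets[OF \<mu>(2) refl])
  interpret \<mu>X: prob_space ?\<mu>X using prob_space.prob_space_distr[OF \<mu>(1) fst_meas] .
  note [measurable] = measurable_emeasure_singleton[OF std \<mu>X.subprob_space_axioms sets_distr]
  have "AE x in ?\<mu>X. emeasure ?\<mu>X {x} \<noteq> 0"
    using atoms by (subst AE_iff_measurable[where N="{x \<in> space MX. emeasure ?\<mu>X {x} = 0}"]) auto
  then show ?thesis by (simp add: AE_distr_iff)
qed

lemma graph_measure_eq_density:
  fixes \<mu> :: "('x \<times> 'y) measure" and MX :: "'x measure" and MY :: "'y measure"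
  defines "\<mu>X \<equiv> distr \<mu> MX fst" and "\<mu>Y \<equiv> distr \<mu> MY snd"
  assumes std: "standard_via MX (fX :: 'x \<Rightarrow> 'p::polish_space)"
    and \<mu>: "prob_space \<mu>" "sets \<mu> = sets (MX \<Otimes>\<^sub>M MY)"
    and t[measurable]: "t \<in> MY \<rightarrow>\<^sub>M MX"
    and graph: "AE xy in \<mu>. fst xy = t (snd xy)"
    and atoms: "emeasure \<mu>X {x \<in> space MX. emeasure \<mu>X {x} = 0} = 0"
  shows "density (\<mu>X \<Otimes>\<^sub>M \<mu>Y) (graph_density \<mu>X t) = \<mu>"
proof (rule measure_eqI)
  have [measurable]: "fst \<in> \<mu> \<rightarrow>\<^sub>M MX" "snd \<in> \<mu> \<rightarrow>\<^sub>M MY"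
    by (simp_all add: measurable_cong_sets[OF \<mu>(2) refl])
  interpret \<mu>X: prob_space \<mu>X unfolding \<mu>X_def by (rule prob_space.prob_space_distr[OF \<mu>(1)]) simp
  interpret \<mu>Y: prob_space \<mu>Y unfolding \<mu>Y_def by (rule prob_space.prob_space_distr[OF \<mu>(1)]) simp
  interpret pair_sigma_finite \<mu>X \<mu>Y ..
  have sets_\<mu>X: "sets \<mu>X = sets MX" and space_\<mu>Y: "space \<mu>Y = space MY" by (simp_all add: \<mu>X_def \<mu>Y_def)
  have sets_prod: "sets (\<mu>X \<Otimes>\<^sub>M \<mu>Y) = sets (MX \<Otimes>\<^sub>M MY)"
    by (rule sets_pair_measure_cong) (simp_all add: \<mu>X_def \<mu>Y_def)
  have gd: "graph_density \<mu>X t \<in> borel_measurable (\<mu>X \<Otimes>\<^sub>M \<mu>Y)"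
    using measurable_graph_density[OF std \<mu>X.subprob_space_axioms sets_\<mu>X t]
    by (simp add: measurable_cong_sets[OF sets_prod refl])
  show "sets (density (\<mu>X \<Otimes>\<^sub>M \<mu>Y) (graph_density \<mu>X t)) = sets \<mu>" using \<mu>(2) sets_prod by simp
  fix A assume "A \<in> sets (density (\<mu>X \<Otimes>\<^sub>M \<mu>Y) (graph_density \<mu>X t))"
  then have A[measurable]: "A \<in> sets (MX \<Otimes>\<^sub>M MY)" using sets_prod by simp
  let ?on_graph = "\<lambda>y. if emeasure \<mu>X {t y} \<noteq> 0 then indicator A (t y, y) else 0 :: ennreal"
  have "emeasure (density (\<mu>X \<Otimes>\<^sub>M \<mu>Y) (graph_density \<mu>X t)) A
      = (\<integral>\<^sup>+ xy. graph_density \<mu>X t xy * indicator A xy \<partial>(\<mu>X \<Otimes>\<^sub>M \<mu>Y))"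
    using A gd sets_prod by (simp add: emeasure_density)
  also have "\<dots> = (\<integral>\<^sup>+ y. \<integral>\<^sup>+ x. graph_density \<mu>X t (x, y) * indicator A (x, y) \<partial>\<mu>X \<partial>\<mu>Y)"
    by (rule nn_integral_snd[symmetric])
      (use A gd sets_prod in \<open>simp add: measurable_cong_sets[OF sets_prod refl]\<close>)
  also have "\<dots> = (\<integral>\<^sup>+ y. ?on_graph y \<partial>\<mu>Y)"
    using measurable_space[OF t] space_\<mu>Y singleton_sets_standard_via[OF std] sets_\<mu>X
    by (intro nn_integral_cong nn_integral_graph_density_section[OF \<mu>X.finite_measure_axioms]) auto
  also have "\<dots> = (\<integral>\<^sup>+ xy. ?on_graph (snd xy) \<partial>\<mu>)"
    unfolding \<mu>Y_def using measurable_emeasure_singleton[OF std \<mu>X.subprob_space_axioms sets_\<mu>X]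
    by (subst nn_integral_distr) auto
  also have "\<dots> = (\<integral>\<^sup>+ xy. indicator A xy \<partial>\<mu>)"
    by (rule nn_integral_cong_AE)
      (use graph AE_fst_atom_nonzero[OF std \<mu> atoms[unfolded \<mu>X_def]] in
        \<open>eventually_elim, auto simp: \<mu>X_def\<close>)
  also have "\<dots> = emeasure \<mu> A" using A \<mu>(2) by simp
  finally show "emeasure (density (\<mu>X \<Otimes>\<^sub>M \<mu>Y) (graph_density \<mu>X t)) A = emeasure \<mu> A" .
qed

lemma MI_graph_measure:
  fixes \<mu> :: "('x \<times> 'y) measure" and MX :: "'x measure" and MY :: "'y measure"
  defines "\<mu>X \<equiv> distr \<mu> MX fst"
  assumes std: "standard_via MX (fX :: 'x \<Rightarrow> 'p::polish_space)"
    and \<mu>: "prob_space \<mu>" "sets \<mu> = sets (MX \<Otimes>\<^sub>M MY)"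
    and t: "t \<in> MY \<rightarrow>\<^sub>M MX"
    and graph: "AE xy in \<mu>. fst xy = t (snd xy)"
    and atoms: "emeasure \<mu>X {x \<in> space MX. emeasure \<mu>X {x} = 0} = 0"
  shows "MI MX MY \<mu> = enn2ereal (\<integral>\<^sup>+ xy. ennreal (- ln (enn2real (emeasure \<mu>X {fst xy}))) \<partial>\<mu>)"
  unfolding MI_def \<mu>X_def[symmetric]
proof (rule KL_density_inverse)
  let ?\<mu>Y = "distr \<mu> MY snd"
  have [measurable]: "fst \<in> \<mu> \<rightarrow>\<^sub>M MX" "snd \<in> \<mu> \<rightarrow>\<^sub>M MY"
    by (simp_all add: measurable_cong_sets[OF \<mu>(2) refl])
  interpret \<mu>X: prob_space \<mu>X unfolding \<mu>X_def by (rule prob_space.prob_space_distr[OF \<mu>(1)]) simp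
  have sets_prod: "sets (\<mu>X \<Otimes>\<^sub>M ?\<mu>Y) = sets (MX \<Otimes>\<^sub>M MY)"
    by (rule sets_pair_measure_cong) (simp_all add: \<mu>X_def)
  show "prob_space (\<mu>X \<Otimes>\<^sub>M ?\<mu>Y)"
    by (intro prob_space_pair \<mu>X.prob_space_axioms prob_space.prob_space_distr[OF \<mu>(1)]) simp
  show "sets \<mu> = sets (\<mu>X \<Otimes>\<^sub>M ?\<mu>Y)" using \<mu>(2) sets_prod by simp
  show "density (\<mu>X \<Otimes>\<^sub>M ?\<mu>Y) (graph_density \<mu>X t) = \<mu>"
    unfolding \<mu>X_def by (rule graph_measure_eq_density[OF std \<mu> t graph atoms[unfolded \<mu>X_def]])
  show "graph_density \<mu>X t \<in> borel_measurable (\<mu>X \<Otimes>\<^sub>M ?\<mu>Y)"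
    using measurable_graph_density[OF std \<mu>X.subprob_space_axioms _ t]
    by (simp add: measurable_cong_sets[OF sets_prod refl] \<mu>X_def)
  show "AE w in \<mu>. graph_density \<mu>X t w = inverse (emeasure \<mu>X {fst w})
      \<and> 0 < emeasure \<mu>X {fst w} \<and> emeasure \<mu>X {fst w} \<le> 1"
    using graph AE_fst_atom_nonzero[OF std \<mu> atoms[unfolded \<mu>X_def]]
    by eventually_elim
      (auto simp: graph_density_def \<mu>X.emeasure_le_1 zero_less_iff_neq_zero \<mu>X_def[symmetric])
qed

lemma MI_graph_measure_point_mass:
  fixes \<mu> :: "('x \<times> 'y) measure" and MX :: "'x measure" and MY :: "'y measure"
  defines "\<mu>X \<equiv> distr \<mu> MX fst"
  assumes std: "standard_via MX (fX :: 'x \<Rightarrow> 'p::polish_space)"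
    and \<mu>: "prob_space \<mu>" "sets \<mu> = sets (MX \<Otimes>\<^sub>M MY)"
    and t: "t \<in> MY \<rightarrow>\<^sub>M MX"
    and graph: "AE xy in \<mu>. fst xy = t (snd xy)"
    and x0: "x0 \<in> space MX" "emeasure \<mu>X {x0} = 1"
  shows "MI MX MY \<mu> = 0"
proof -
  have [measurable]: "fst \<in> \<mu> \<rightarrow>\<^sub>M MX" by (simp add: measurable_cong_sets[OF \<mu>(2) refl])
  interpret \<mu>X: prob_space \<mu>X unfolding \<mu>X_def by (rule prob_space.prob_space_distr[OF \<mu>(1)]) simp
  have sets_\<mu>X: "sets \<mu>X = sets MX" by (simp add: \<mu>X_def)
  note [measurable] = measurable_emeasure_singleton[OF std \<mu>X.subprob_space_axioms sets_\<mu>X]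
  have x0_sets: "{x0} \<in> sets \<mu>X" using singleton_sets_standard_via[OF std x0(1)] sets_\<mu>X by simp
  have atoms: "emeasure \<mu>X {x \<in> space MX. emeasure \<mu>X {x} = 0} = 0"
    by (rule \<mu>X.emeasure_null_atoms_countable_support[OF x0_sets _ x0(2)]) (use x0_sets sets_\<mu>X in auto)
  have "AE x in \<mu>X. x = x0" by (rule \<mu>X.AE_eq_point_mass[OF x0_sets x0(2)])
  moreover have "{x \<in> space MX. x = x0} = {x0}" using x0(1) by auto
  ultimately have "AE xy in \<mu>. fst xy = x0" using x0_sets sets_\<mu>X
    unfolding \<mu>X_def by (subst (asm) AE_distr_iff) auto
  then have "(\<integral>\<^sup>+ xy. ennreal (- ln (enn2real (emeasure \<mu>X {fst xy}))) \<partial>\<mu>) = (\<integral>\<^sup>+ xy. 0 \<partial>\<mu>)"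
    by (rule nn_integral_cong_AE[OF eventually_mono]) (simp add: x0(2))
  then show ?thesis
    using MI_graph_measure[OF std \<mu> t graph atoms[unfolded \<mu>X_def]] by (simp add: \<mu>X_def zero_ennreal.rep_eq)
qed

locale deterministic_channel =
  fixes M :: "'w measure"
    and MX :: "'x measure" and MY :: "'y measure" and MZ :: "'z measure"
    and X :: "'w \<Rightarrow> 'x" and Y :: "'w \<Rightarrow> 'y" and Z :: "'w \<Rightarrow> 'z"
    and T :: "'y \<times> 'z \<Rightarrow> 'x"
    and fX :: "'x \<Rightarrow> 'px::polish_space"
    and K :: "'z \<Rightarrow> ('x \<times> 'y) measure"
  assumes M: "prob_space M"
    and stdX: "standard_via MX fX"
    and Y_rv[measurable]: "Y \<in> M \<rightarrow>\<^sub>M MY" and Z_rv[measurable]: "Z \<in> M \<rightarrow>\<^sub>M MZ"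
    and T_meas[measurable]: "T \<in> MY \<Otimes>\<^sub>M MZ \<rightarrow>\<^sub>M MX"
    and X_def: "\<forall>\<omega>\<in>space M. X \<omega> = T (Y \<omega>, Z \<omega>)"
    and K_meas[measurable]: "K \<in> MZ \<rightarrow>\<^sub>M prob_algebra (MX \<Otimes>\<^sub>M MY)"
    and K_disint: "\<forall>B\<in>sets (MX \<Otimes>\<^sub>M MY). \<forall>C\<in>sets MZ.
        emeasure M {\<omega>\<in>space M. (X \<omega>, Y \<omega>) \<in> B \<and> Z \<omega> \<in> C}
          = (\<integral>\<^sup>+ z. emeasure (K z) B * indicator C z \<partial>distr M MZ Z)"
begin

abbreviation "KX z \<equiv> distr (K z) MX fst"
abbreviation "KY z \<equiv> distr (K z) MY snd"
abbreviation "PZ \<equiv> distr M MZ Z"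
abbreviation "S \<equiv> (MX \<Otimes>\<^sub>M MY) \<Otimes>\<^sub>M MZ"
abbreviation "P \<equiv> distr M S (\<lambda>\<omega>. ((X \<omega>, Y \<omega>), Z \<omega>))"
abbreviation "Q \<equiv> cond_prod_measure MX MY MZ PZ K"

abbreviation "A0 \<equiv> {z\<in>space MZ. \<exists>x\<in>space MX. emeasure (KX z) {x} = 1}"
abbreviation "Aatomic \<equiv> {z\<in>space MZ. \<not> (\<exists>x\<in>space MX. emeasure (KX z) {x} = 1) \<and>
    (\<exists>B\<in>sets MX. countable B \<and> \<not> (\<exists>x. B = {x}) \<and> emeasure (KX z) B = 1)}"
abbreviation "Acont \<equiv> {z\<in>space MZ. \<exists>B\<in>sets MX. emeasure (KX z) B > 0 \<and> (\<forall>x\<in>B. emeasure (KX z) {x} = 0)}"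

abbreviation "null_atoms z \<equiv> {x \<in> space MX. emeasure (KX z) {x} = 0}"

lemma X_rv[measurable]: "X \<in> M \<rightarrow>\<^sub>M MX"
proof -
  have "(\<lambda>\<omega>. T (Y \<omega>, Z \<omega>)) \<in> M \<rightarrow>\<^sub>M MX" by measurable
  then show ?thesis by (rule measurable_cong[THEN iffD2, rotated]) (simp add: X_def)
qed

lemma pred_eqX[measurable]: "f \<in> N \<rightarrow>\<^sub>M MX \<Longrightarrow> g \<in> N \<rightarrow>\<^sub>M MX \<Longrightarrow> Measurable.pred N (\<lambda>w. f w = g w)"
  by (rule pred_eq_standard_via[OF stdX])

lemma K_subprob[measurable]: "K \<in> MZ \<rightarrow>\<^sub>M subprob_algebra (MX \<Otimes>\<^sub>M MY)"
  using K_meas by (rule measurable_prob_algebraD)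

lemma K_space: "z \<in> space MZ \<Longrightarrow> prob_space (K z)" "z \<in> space MZ \<Longrightarrow> sets (K z) = sets (MX \<Otimes>\<^sub>M MY)"
  using measurable_space[OF K_meas] by (auto simp: space_prob_algebra)

lemma KX_meas[measurable]: "KX \<in> MZ \<rightarrow>\<^sub>M prob_algebra MX"
  by (rule measurable_compose[OF K_meas measurable_distr_prob_space]) simp

lemma KY_meas[measurable]: "KY \<in> MZ \<rightarrow>\<^sub>M prob_algebra MY"
  by (rule measurable_compose[OF K_meas measurable_distr_prob_space]) simp

lemma KX_prob: "z \<in> space MZ \<Longrightarrow> prob_space (KX z)"
  using measurable_space[OF KX_meas] by (auto simp: space_prob_algebra)

lemma KY_prob: "z \<in> space MZ \<Longrightarrow> prob_space (KY z)"
  using measurable_space[OF KY_meas] by (auto simp: space_prob_algebra)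

lemma sets_KXKY: "z \<in> space MZ \<Longrightarrow> sets (KX z \<Otimes>\<^sub>M KY z) = sets (MX \<Otimes>\<^sub>M MY)"
  by (intro sets_pair_measure_cong) auto

lemma atom_meas[measurable]: "(\<lambda>(z, x). emeasure (KX z) {x}) \<in> borel_measurable (MZ \<Otimes>\<^sub>M MX)"
  by (rule measurable_emeasure_singleton_kernel[OF stdX measurable_prob_algebraD[OF KX_meas]])

lemma atom_meas'[measurable]: "z \<in> space MZ \<Longrightarrow> (\<lambda>x. emeasure (KX z) {x}) \<in> borel_measurable MX"
  using measurable_Pair2[OF atom_meas, of z] by simp

lemma measurable_emeasure_atom_level:
  "(\<lambda>z. emeasure (KX z) {x \<in> space MX. emeasure (KX z) {x} = c}) \<in> borel_measurable MZ"
proof (rule emeasure_measurable_subprob_algebra2)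
  have "{w \<in> space (MZ \<Otimes>\<^sub>M MX). (case w of (z, x) \<Rightarrow> emeasure (KX z) {x}) = c} \<in> sets (MZ \<Otimes>\<^sub>M MX)"
    by measurable
  also have "{w \<in> space (MZ \<Otimes>\<^sub>M MX). (case w of (z, x) \<Rightarrow> emeasure (KX z) {x}) = c} =
    (SIGMA z:space MZ. {x \<in> space MX. emeasure (KX z) {x} = c})"
    by (auto simp: space_pair_measure)
  finally show "(SIGMA z:space MZ. {x \<in> space MX. emeasure (KX z) {x} = c}) \<in> sets (MZ \<Otimes>\<^sub>M MX)" .
qed (rule measurable_prob_algebraD[OF KX_meas])

lemma null_atoms_sets: "z \<in> space MZ \<Longrightarrow> null_atoms z \<in> sets MX"
  by measurable

lemma Acont_iff: "z \<in> space MZ \<Longrightarrow> z \<in> Acont \<longleftrightarrow> 0 < emeasure (KX z) (null_atoms z)"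
proof
  assume z: "z \<in> space MZ" and "z \<in> Acont"
  then obtain B where B: "B \<in> sets MX" "emeasure (KX z) B > 0" "\<forall>x\<in>B. emeasure (KX z) {x} = 0"
    by blast
  have "B \<subseteq> null_atoms z" using B sets.sets_into_space by blast
  then have "emeasure (KX z) B \<le> emeasure (KX z) (null_atoms z)"
    by (rule emeasure_mono) (use z null_atoms_sets in auto)
  with B show "0 < emeasure (KX z) (null_atoms z)" by simp
qed (use null_atoms_sets in blast)

lemma A0_iff: "z \<in> space MZ \<Longrightarrow> z \<in> A0 \<longleftrightarrow> 0 < emeasure (KX z) {x \<in> space MX. emeasure (KX z) {x} = 1}"
proof
  assume z: "z \<in> space MZ" and "z \<in> A0"
  then obtain x where x: "x \<in> space MX" "emeasure (KX z) {x} = 1" by blast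
  have "emeasure (KX z) {x} \<le> emeasure (KX z) {x \<in> space MX. emeasure (KX z) {x} = 1}"
    by (rule emeasure_mono) (use x z in auto)
  with x show "0 < emeasure (KX z) {x \<in> space MX. emeasure (KX z) {x} = 1}"
    using less_le_trans[OF zero_less_one] by simp
next
  assume "z \<in> space MZ" and "0 < emeasure (KX z) {x \<in> space MX. emeasure (KX z) {x} = 1}"
  then show "z \<in> A0" by (metis (mono_tags, lifting) emeasure_empty empty_Collect_eq less_irrefl mem_Collect_eq)
qed

lemma A0_sets: "A0 \<in> sets MZ"
proof -
  have "A0 = {z \<in> space MZ. 0 < emeasure (KX z) {x \<in> space MX. emeasure (KX z) {x} = 1}}"
    using A0_iff by blast
  also have "\<dots> \<in> sets MZ" using measurable_emeasure_atom_level[of 1] by measurable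
  finally show ?thesis .
qed

lemma Acont_sets: "Acont \<in> sets MZ"
proof -
  have "Acont = {z \<in> space MZ. 0 < emeasure (KX z) (null_atoms z)}"
    using Acont_iff by blast
  also have "\<dots> \<in> sets MZ" using measurable_emeasure_atom_level[of 0] by measurable
  finally show ?thesis .
qed

lemma A0_null_atoms:
  assumes "z \<in> A0" shows "emeasure (KX z) (null_atoms z) = 0"
proof -
  from assms have z: "z \<in> space MZ" by simp
  interpret KX: prob_space "KX z" by (rule KX_prob[OF z])
  from assms obtain x0 where x0: "x0 \<in> space MX" "emeasure (KX z) {x0} = 1" by blast
  have x0_sets: "{x0} \<in> sets (KX z)" using singleton_sets_standard_via[OF stdX x0(1)] by simp
  show ?thesis
    by (rule KX.emeasure_null_atoms_countable_support[OF x0_sets _ x0(2)])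
      (use x0_sets null_atoms_sets[OF z] in auto)
qed

lemma countable_support_not_cont:
  assumes z: "z \<in> space MZ" and B: "B \<in> sets MX" "countable B" "emeasure (KX z) B = 1"
  shows "z \<notin> Acont"
proof
  interpret KX: prob_space "KX z" by (rule KX_prob[OF z])
  assume "z \<in> Acont"
  then obtain C where C: "C \<in> sets MX" "emeasure (KX z) C > 0" "\<forall>x\<in>C. emeasure (KX z) {x} = 0"
    by blast
  have "\<And>x. x \<in> B \<Longrightarrow> {x} \<in> sets MX"
    using B(1) sets.sets_into_space singleton_sets_standard_via[OF stdX] by blast
  then have "emeasure (KX z) C = 0"
    using C B by (intro KX.emeasure_null_atoms_countable_support[of B C]) simp_all
  with C(2) show False by simp
qed

lemma not_A0_not_cont_atomic:
  assumes z: "z \<in> space MZ" and not_A0: "z \<notin> A0" and not_cont: "z \<notin> Acont"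
  shows "z \<in> Aatomic"
proof -
  interpret KX: prob_space "KX z" by (rule KX_prob[OF z])
  let ?B = "{x \<in> space MX. emeasure (KX z) {x} \<noteq> 0}"
  from not_cont have "\<not> 0 < emeasure (KX z) (null_atoms z)"
    by (subst (asm) Acont_iff[OF z])
  then have "emeasure (KX z) (null_atoms z) = 0" by (simp only: not_gr_zero)
  then have "null_atoms z \<in> null_sets (KX z)"
    using null_atoms_sets[OF z] by (simp add: null_sets_def)
  then have B: "countable ?B" "?B \<in> sets MX" "emeasure (KX z) ?B = 1"
    using KX.atoms_countable_support by simp_all
  have "?B \<noteq> {x}" for x
  proof
    assume "?B = {x}"
    with B(3) have "x \<in> space MX" "emeasure (KX z) {x} = 1" by auto
    with z have "z \<in> A0" by blast
    with not_A0 show False by contradiction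
  qed
  with B have atomic: "\<exists>B\<in>sets MX. countable B \<and> \<not> (\<exists>x. B = {x}) \<and> emeasure (KX z) B = 1"
    by blast
  from not_A0 z have "\<not> (\<exists>x\<in>space MX. emeasure (KX z) {x} = 1)" by simp
  with z atomic show ?thesis by simp
qed

lemma Aatomic_eq: "Aatomic = space MZ - A0 - Acont"
proof (intro equalityI subsetI)
  fix z assume z: "z \<in> Aatomic"
  then obtain B where "B \<in> sets MX" "countable B" "emeasure (KX z) B = 1" by blast
  with z have "z \<notin> Acont" by (intro countable_support_not_cont) simp_all
  with z show "z \<in> space MZ - A0 - Acont" by simp
qed (use not_A0_not_cont_atomic in simp)

lemma Aatomic_sets: "Aatomic \<in> sets MZ"
  unfolding Aatomic_eq using A0_sets Acont_sets by auto

definition "P_fibre z = distr (K z) S (\<lambda>xy. (xy, z))"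
definition "Q_fibre z = distr (KX z \<Otimes>\<^sub>M KY z) S (\<lambda>xy. (xy, z))"

lemma P_fibre_meas[measurable]: "P_fibre \<in> MZ \<rightarrow>\<^sub>M prob_algebra S"
  unfolding P_fibre_def by (rule measurable_distr_prob_space2[OF K_meas]) measurable

lemma Q_fibre_meas[measurable]: "Q_fibre \<in> MZ \<rightarrow>\<^sub>M prob_algebra S"
  unfolding Q_fibre_def
  by (rule measurable_distr_prob_space2[OF measurable_pair_prob[OF KX_meas KY_meas]]) measurable

lemma PZ_prob: "PZ \<in> space (prob_algebra MZ)"
  using prob_space.prob_space_distr[OF M Z_rv] by (simp add: space_prob_algebra)

lemma measurable_PZ: "measurable PZ N = measurable MZ N"
  by (rule measurable_cong_sets) auto

lemma P_prob: "prob_space P"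
  by (rule prob_space.prob_space_distr[OF M]) measurable

lemma P_eq_bind: "P = PZ \<bind> P_fibre"
proof (rule measure_eqI_generator_eq[OF Int_stable_pair_measure_generator[of "MX \<Otimes>\<^sub>M MY" MZ]])
  let ?E = "{a \<times> b |a b. a \<in> sets (MX \<Otimes>\<^sub>M MY) \<and> b \<in> sets MZ}"
  show "?E \<subseteq> Pow (space (MX \<Otimes>\<^sub>M MY) \<times> space MZ)"
    by (auto dest: sets.sets_into_space)
  show "sets P = sigma_sets (space (MX \<Otimes>\<^sub>M MY) \<times> space MZ) ?E"
    by (simp add: sets_pair_measure[of "MX \<Otimes>\<^sub>M MY" MZ])
  show "sets (PZ \<bind> P_fibre) = sigma_sets (space (MX \<Otimes>\<^sub>M MY) \<times> space MZ) ?E"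
    by (simp add: sets_bind'[OF PZ_prob P_fibre_meas] sets_pair_measure[of "MX \<Otimes>\<^sub>M MY" MZ])
  show "range (\<lambda>i. space (MX \<Otimes>\<^sub>M MY) \<times> space MZ) \<subseteq> ?E" by blast
  show "emeasure P (space (MX \<Otimes>\<^sub>M MY) \<times> space MZ) \<noteq> \<infinity>"
    using finite_measure.emeasure_finite[OF prob_space.finite_measure[OF P_prob]] by simp
next
  fix A assume "A \<in> {a \<times> b |a b. a \<in> sets (MX \<Otimes>\<^sub>M MY) \<and> b \<in> sets MZ}"
  then obtain B C where A: "A = B \<times> C" and B: "B \<in> sets (MX \<Otimes>\<^sub>M MY)" and C: "C \<in> sets MZ" by blast
  have "emeasure P A = emeasure M {\<omega>\<in>space M. (X \<omega>, Y \<omega>) \<in> B \<and> Z \<omega> \<in> C}"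
    unfolding A using B C by (subst emeasure_distr) (auto intro!: arg_cong[where f="emeasure M"])
  also have "\<dots> = (\<integral>\<^sup>+ z. emeasure (K z) B * indicator C z \<partial>PZ)"
    using K_disint B C by simp
  also have "\<dots> = (\<integral>\<^sup>+ z. emeasure (P_fibre z) A \<partial>PZ)"
  proof (rule nn_integral_cong)
    fix z assume "z \<in> space PZ"
    then have z: "z \<in> space MZ" by simp
    have "emeasure (P_fibre z) A = emeasure (K z) ((\<lambda>xy. (xy, z)) -` A \<inter> space (K z))"
      unfolding P_fibre_def using z A B C
      by (subst emeasure_distr) (auto simp: measurable_cong_sets[OF K_space(2)[OF z] refl])
    also have "(\<lambda>xy. (xy, z)) -` A \<inter> space (K z) = (if z \<in> C then B else {})"
      using sets.sets_into_space[OF B] sets_eq_imp_space_eq[OF K_space(2)[OF z]] A by auto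
    finally show "emeasure (K z) B * indicator C z = emeasure (P_fibre z) A"
      by (simp add: indicator_def)
  qed
  also have "\<dots> = emeasure (PZ \<bind> P_fibre) A"
    using A B C by (subst emeasure_bind_prob_algebra[OF PZ_prob P_fibre_meas]) auto
  finally show "emeasure P A = emeasure (PZ \<bind> P_fibre) A" .
qed simp

lemma Q_eq_bind: "Q = PZ \<bind> Q_fibre"
  unfolding cond_prod_measure_def Q_fibre_def ..

lemma Q_prob: "prob_space Q"
  unfolding Q_eq_bind by (rule prob_space_bind'[OF PZ_prob Q_fibre_meas])

lemma sets_Q[simp]: "sets Q = sets S"
  unfolding Q_eq_bind by (rule sets_bind'[OF PZ_prob Q_fibre_meas])

lemma nn_integral_P:
  assumes h[measurable]: "h \<in> borel_measurable S"
  shows "(\<integral>\<^sup>+ w. h w \<partial>P) = (\<integral>\<^sup>+ z. \<integral>\<^sup>+ xy. h (xy, z) \<partial>K z \<partial>PZ)"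
proof -
  have "(\<integral>\<^sup>+ w. h w \<partial>P) = (\<integral>\<^sup>+ z. \<integral>\<^sup>+ w. h w \<partial>P_fibre z \<partial>PZ)"
    unfolding P_eq_bind
    by (rule nn_integral_bind[OF h]) (simp add: measurable_PZ measurable_prob_algebraD)
  also have "\<dots> = (\<integral>\<^sup>+ z. \<integral>\<^sup>+ xy. h (xy, z) \<partial>K z \<partial>PZ)"
    unfolding P_fibre_def
    by (intro nn_integral_cong, subst nn_integral_distr)
      (auto simp: measurable_cong_sets[OF K_space(2) refl])
  finally show ?thesis .
qed

lemma nn_integral_Q:
  assumes h[measurable]: "h \<in> borel_measurable S"
  shows "(\<integral>\<^sup>+ w. h w \<partial>Q) = (\<integral>\<^sup>+ z. \<integral>\<^sup>+ xy. h (xy, z) \<partial>(KX z \<Otimes>\<^sub>M KY z) \<partial>PZ)"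
proof -
  have "(\<integral>\<^sup>+ w. h w \<partial>Q) = (\<integral>\<^sup>+ z. \<integral>\<^sup>+ w. h w \<partial>Q_fibre z \<partial>PZ)"
    unfolding Q_eq_bind
    by (rule nn_integral_bind[OF h]) (simp add: measurable_PZ measurable_prob_algebraD)
  also have "\<dots> = (\<integral>\<^sup>+ z. \<integral>\<^sup>+ xy. h (xy, z) \<partial>(KX z \<Otimes>\<^sub>M KY z) \<partial>PZ)"
    unfolding Q_fibre_def
    by (intro nn_integral_cong, subst nn_integral_distr)
      (auto simp: measurable_cong_sets[OF sets_KXKY refl])
  finally show ?thesis .
qed

lemma measurable_nn_integral_K[measurable]:
  assumes [measurable]: "h \<in> borel_measurable S"
  shows "(\<lambda>z. \<integral>\<^sup>+ xy. h (xy, z) \<partial>K z) \<in> borel_measurable MZ"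
  by (rule nn_integral_measurable_subprob_algebra2[OF _ K_subprob]) measurable

lemma AE_P_iff:
  assumes R[measurable]: "Measurable.pred S R"
  shows "(AE w in P. R w) \<longleftrightarrow> (AE z in PZ. AE xy in K z. R (xy, z))"
proof -
  let ?N = "indicator {w. \<not> R w} :: _ \<Rightarrow> ennreal"
  have "(AE w in P. R w) \<longleftrightarrow> (\<integral>\<^sup>+ w. ?N w \<partial>P) = 0"
    by (rule AE_iff_nn_integral) simp
  also have "\<dots> \<longleftrightarrow> (\<integral>\<^sup>+ z. \<integral>\<^sup>+ xy. ?N (xy, z) \<partial>K z \<partial>PZ) = 0"
    by (subst nn_integral_P) simp_all
  also have "\<dots> \<longleftrightarrow> (AE z in PZ. (\<integral>\<^sup>+ xy. ?N (xy, z) \<partial>K z) = 0)"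
    by (rule nn_integral_0_iff_AE) (simp add: measurable_PZ)
  also have "\<dots> \<longleftrightarrow> (AE z in PZ. AE xy in K z. R (xy, z))"
  proof (rule AE_cong)
    fix z assume "z \<in> space PZ"
    then have z: "z \<in> space MZ" by simp
    have "Measurable.pred (K z) (\<lambda>xy. R (xy, z))"
      using z by (simp add: measurable_cong_sets[OF K_space(2)[OF z] refl])
    moreover have "(\<lambda>xy. ?N (xy, z)) = indicator {xy. \<not> R (xy, z)}"
      by (simp add: fun_eq_iff indicator_def)
    ultimately show "(\<integral>\<^sup>+ xy. ?N (xy, z) \<partial>K z) = 0 \<longleftrightarrow> (AE xy in K z. R (xy, z))"
      by (simp add: AE_iff_nn_integral pred_def)
  qed
  finally show ?thesis .
qed

lemma AE_graph: "AE z in PZ. AE xy in K z. fst xy = T (snd xy, z)"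
proof -
  have "AE w in P. fst (fst w) = T (snd (fst w), snd w)"
    using X_def by (simp add: AE_distr_iff AE_I2)
  then show ?thesis by (subst (asm) AE_P_iff) simp_all
qed

lemma T_section[measurable]: "z \<in> space MZ \<Longrightarrow> (\<lambda>y. T (y, z)) \<in> MY \<rightarrow>\<^sub>M MX"
  by measurable

lemma AE_not_cont_iff: "(AE z in PZ. z \<notin> Acont) \<longleftrightarrow> emeasure PZ Acont = 0"
proof (rule AE_iff_measurable)
  show "Acont \<in> sets PZ" using Acont_sets by simp
  show "{z \<in> space PZ. \<not> z \<notin> Acont} = Acont" by (simp only: space_distr not_not) blast
qed

lemma AE_regular_fibres:
  assumes "emeasure PZ Acont = 0"
  shows "AE z in PZ. z \<in> space MZ \<and> (AE xy in K z. fst xy = T (snd xy, z))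
    \<and> emeasure (KX z) (null_atoms z) = 0"
proof -
  from assms have "AE z in PZ. z \<notin> Acont" by (simp only: AE_not_cont_iff)
  with AE_graph AE_space show ?thesis
  proof eventually_elim
    fix z assume graph: "AE xy in K z. fst xy = T (snd xy, z)"
      and "z \<in> space PZ" and not_cont: "z \<notin> Acont"
    then have z: "z \<in> space MZ" by simp
    from not_cont have "\<not> 0 < emeasure (KX z) (null_atoms z)" by (subst (asm) Acont_iff[OF z])
    with graph z show "z \<in> space MZ \<and> (AE xy in K z. fst xy = T (snd xy, z))
      \<and> emeasure (KX z) (null_atoms z) = 0" by (simp only: not_gr_zero simp_thms)
  qed
qed

lemma K_eq_density:
  assumes z: "z \<in> space MZ" and graph: "AE xy in K z. fst xy = T (snd xy, z)"
    and atoms: "emeasure (KX z) (null_atoms z) = 0"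
  shows "density (KX z \<Otimes>\<^sub>M KY z) (graph_density (KX z) (\<lambda>y. T (y, z))) = K z"
  using graph_measure_eq_density[OF stdX K_space[OF z] T_section[OF z] graph atoms] .

lemma MI_K_eq_nn_integral:
  assumes z: "z \<in> space MZ" and graph: "AE xy in K z. fst xy = T (snd xy, z)"
    and atoms: "emeasure (KX z) (null_atoms z) = 0"
  shows "e2ennreal (MI MX MY (K z)) * indicator Aatomic z
    = (\<integral>\<^sup>+ xy. ennreal (- ln (enn2real (emeasure (KX z) {fst xy}))) \<partial>K z)"
proof (cases "z \<in> A0")
  case True
  then obtain x0 where "x0 \<in> space MX" "emeasure (KX z) {x0} = 1" by blast
  from MI_graph_measure_point_mass[OF stdX K_space[OF z] T_section[OF z] graph this]
    MI_graph_measure[OF stdX K_space[OF z] T_section[OF z] graph atoms]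
  show ?thesis using True by (simp add: Aatomic_eq) (metis e2ennreal_enn2ereal zero_ennreal.rep_eq)
next
  case False
  have "z \<notin> Acont" using atoms Acont_iff[OF z] by simp
  with False z have "z \<in> Aatomic" using Aatomic_eq by simp
  with MI_graph_measure[OF stdX K_space[OF z] T_section[OF z] graph atoms]
  show ?thesis by (simp add: e2ennreal_enn2ereal)
qed

definition "G w = graph_density (KX (snd w)) (\<lambda>y. T (y, snd w)) (fst w)"

lemma G_meas[measurable]: "G \<in> borel_measurable S"
  unfolding G_def graph_density_def by measurable

lemma P_eq_density_Q:
  assumes "emeasure PZ Acont = 0"
  shows "density Q G = P"
proof (rule measure_eqI)
  show "sets (density Q G) = sets P" by simp
  fix E assume "E \<in> sets (density Q G)"
  then have E[measurable]: "E \<in> sets S" by simp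
  have "emeasure (density Q G) E = (\<integral>\<^sup>+ w. G w * indicator E w \<partial>Q)"
    by (rule emeasure_density) (simp_all add: measurable_cong_sets[OF sets_Q refl])
  also have "\<dots> = (\<integral>\<^sup>+ z. \<integral>\<^sup>+ xy. G (xy, z) * indicator E (xy, z) \<partial>(KX z \<Otimes>\<^sub>M KY z) \<partial>PZ)"
    by (rule nn_integral_Q) measurable
  also have "\<dots> = (\<integral>\<^sup>+ z. \<integral>\<^sup>+ xy. indicator E (xy, z) \<partial>K z \<partial>PZ)"
  proof (rule nn_integral_cong_AE)
    show "AE z in PZ. (\<integral>\<^sup>+ xy. G (xy, z) * indicator E (xy, z) \<partial>(KX z \<Otimes>\<^sub>M KY z))
        = (\<integral>\<^sup>+ xy. indicator E (xy, z) \<partial>K z)"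
      using AE_regular_fibres[OF assms]
    proof eventually_elim
      fix z assume "z \<in> space MZ \<and> (AE xy in K z. fst xy = T (snd xy, z))
        \<and> emeasure (KX z) (null_atoms z) = 0"
      then have z: "z \<in> space MZ"
        and K_z: "density (KX z \<Otimes>\<^sub>M KY z) (graph_density (KX z) (\<lambda>y. T (y, z))) = K z"
        using K_eq_density by auto
      have "(\<integral>\<^sup>+ xy. G (xy, z) * indicator E (xy, z) \<partial>(KX z \<Otimes>\<^sub>M KY z))
          = (\<integral>\<^sup>+ xy. indicator E (xy, z) \<partial>density (KX z \<Otimes>\<^sub>M KY z) (graph_density (KX z) (\<lambda>y. T (y, z))))"
        unfolding G_def
        using z measurable_graph_density[OF stdX prob_space_imp_subprob_space[OF KX_prob[OF z]] _ T_section[OF z]]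
        by (subst nn_integral_density) (simp_all add: measurable_cong_sets[OF sets_KXKY[OF z] refl])
      then show "(\<integral>\<^sup>+ xy. G (xy, z) * indicator E (xy, z) \<partial>(KX z \<Otimes>\<^sub>M KY z))
          = (\<integral>\<^sup>+ xy. indicator E (xy, z) \<partial>K z)"
        by (simp only: K_z)
    qed
  qed
  also have "\<dots> = emeasure P E"
    by (subst nn_integral_P[symmetric]) simp_all
  finally show "emeasure (density Q G) E = emeasure P E" .
qed


lemma KL_P_Q_finite:
  assumes "emeasure PZ Acont = 0"
  shows "KL P Q = enn2ereal (\<integral>\<^sup>+ z. e2ennreal (MI MX MY (K z)) * indicator Aatomic z \<partial>PZ)"
proof -
  let ?atom = "\<lambda>w. emeasure (KX (snd w)) {fst (fst w)}"
  have "KL P Q = enn2ereal (\<integral>\<^sup>+ w. ennreal (- ln (enn2real (?atom w))) \<partial>P)"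
  proof (rule KL_density_inverse[OF Q_prob _ P_eq_density_Q[OF assms]])
    show "AE w in P. G w = inverse (?atom w) \<and> 0 < ?atom w \<and> ?atom w \<le> 1"
    proof (subst AE_P_iff)
      show "AE z in PZ. AE xy in K z. G (xy, z) = inverse (?atom (xy, z)) \<and> 0 < ?atom (xy, z) \<and> ?atom (xy, z) \<le> 1"
        using AE_regular_fibres[OF assms]
      proof eventually_elim
        fix z assume "z \<in> space MZ \<and> (AE xy in K z. fst xy = T (snd xy, z))
          \<and> emeasure (KX z) (null_atoms z) = 0"
        then have z: "z \<in> space MZ" and graph: "AE xy in K z. fst xy = T (snd xy, z)"
          and atoms: "emeasure (KX z) (null_atoms z) = 0" by auto
        interpret KX: prob_space "KX z" by (rule KX_prob[OF z])
        from graph AE_fst_atom_nonzero[OF stdX K_space[OF z] atoms]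
        show "AE xy in K z. G (xy, z) = inverse (?atom (xy, z)) \<and> 0 < ?atom (xy, z) \<and> ?atom (xy, z) \<le> 1"
          by eventually_elim (auto simp: G_def graph_density_def KX.emeasure_le_1 zero_less_iff_neq_zero)
      qed
    qed measurable
  qed (simp_all add: measurable_cong_sets[OF sets_Q refl])
  also have "(\<integral>\<^sup>+ w. ennreal (- ln (enn2real (?atom w))) \<partial>P)
      = (\<integral>\<^sup>+ z. \<integral>\<^sup>+ xy. ennreal (- ln (enn2real (emeasure (KX z) {fst xy}))) \<partial>K z \<partial>PZ)"
    by (subst nn_integral_P) simp_all
  also have "\<dots> = (\<integral>\<^sup>+ z. e2ennreal (MI MX MY (K z)) * indicator Aatomic z \<partial>PZ)"
  proof (rule nn_integral_cong_AE)
    from AE_regular_fibres[OF assms]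
    show "AE z in PZ. (\<integral>\<^sup>+ xy. ennreal (- ln (enn2real (emeasure (KX z) {fst xy}))) \<partial>K z)
        = e2ennreal (MI MX MY (K z)) * indicator Aatomic z"
      by (rule eventually_mono) (elim conjE, rule MI_K_eq_nn_integral[symmetric])
  qed
  finally show ?thesis .
qed

lemma not_cont_if_AE_atom_nonzero:
  assumes z: "z \<in> space MZ" and ae: "AE xy in K z. emeasure (KX z) {fst xy} \<noteq> 0"
  shows "z \<notin> Acont"
proof -
  have "AE x in KX z. emeasure (KX z) {x} \<noteq> 0"
    using ae z by (subst AE_distr_iff) (simp_all add: measurable_cong_sets[OF K_space(2)[OF z] refl])
  then have "emeasure (KX z) (null_atoms z) = 0"
    using null_atoms_sets[OF z] by (subst (asm) AE_iff_measurable[OF _ refl]) auto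
  then show ?thesis using Acont_iff[OF z] by simp
qed

abbreviation "graph_without_atoms \<equiv>
  {w \<in> space S. fst (fst w) = T (snd (fst w), snd w) \<and> emeasure (KX (snd w)) {fst (fst w)} = 0}"

lemma graph_without_atoms_sets[measurable]: "graph_without_atoms \<in> sets S"
  by measurable

lemma graph_without_atoms_null_Q: "graph_without_atoms \<in> null_sets Q"
proof -
  let ?N = graph_without_atoms
  have "emeasure Q ?N = (\<integral>\<^sup>+ z. \<integral>\<^sup>+ xy. indicator ?N (xy, z) \<partial>(KX z \<Otimes>\<^sub>M KY z) \<partial>PZ)"
    by (subst nn_integral_Q[symmetric]) simp_all
  also have "\<dots> = (\<integral>\<^sup>+ z. 0 \<partial>PZ)"
  proof (rule nn_integral_cong)
    fix z assume "z \<in> space PZ"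
    then have z: "z \<in> space MZ" by simp
    let ?N_z = "{xy \<in> space (MX \<Otimes>\<^sub>M MY). fst xy = T (snd xy, z) \<and> emeasure (KX z) {fst xy} = 0}"
    have "(\<integral>\<^sup>+ xy. indicator ?N (xy, z) \<partial>(KX z \<Otimes>\<^sub>M KY z))
        = (\<integral>\<^sup>+ xy. indicator ?N_z xy \<partial>(KX z \<Otimes>\<^sub>M KY z))"
      using z sets_eq_imp_space_eq[OF sets_KXKY[OF z]]
      by (intro nn_integral_cong) (auto simp: indicator_def space_pair_measure)
    also have "\<dots> = emeasure (KX z \<Otimes>\<^sub>M KY z) ?N_z"
      using z by (intro nn_integral_indicator) (simp add: sets_KXKY)
    also have "\<dots> = 0"
      by (rule emeasure_pair_graph_null_atoms[OF stdX KX_prob[OF z] _ KY_prob[OF z] _ T_section[OF z]])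
        simp_all
    finally show "(\<integral>\<^sup>+ xy. indicator ?N (xy, z) \<partial>(KX z \<Otimes>\<^sub>M KY z)) = 0" .
  qed
  finally show ?thesis by (simp add: null_sets_def)
qed

lemma graph_without_atoms_not_null_P:
  assumes Acont: "emeasure PZ Acont \<noteq> 0"
  shows "graph_without_atoms \<notin> null_sets P"
proof
  assume "graph_without_atoms \<in> null_sets P"
  then have "AE w in P. w \<notin> graph_without_atoms" by (rule AE_not_in)
  with AE_space have "AE w in P. fst (fst w) = T (snd (fst w), snd w)
      \<longrightarrow> emeasure (KX (snd w)) {fst (fst w)} \<noteq> 0"
    by eventually_elim auto
  then have "AE z in PZ. AE xy in K z. fst xy = T (snd xy, z) \<longrightarrow> emeasure (KX z) {fst xy} \<noteq> 0"
    by (subst (asm) AE_P_iff) simp_all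
  with AE_graph AE_space have "AE z in PZ. z \<notin> Acont"
  proof eventually_elim
    fix z assume "AE xy in K z. fst xy = T (snd xy, z)" and "z \<in> space PZ"
      and "AE xy in K z. fst xy = T (snd xy, z) \<longrightarrow> emeasure (KX z) {fst xy} \<noteq> 0"
    then show "z \<notin> Acont"
      by (intro not_cont_if_AE_atom_nonzero) (auto elim: AE_mp)
  qed
  then have "emeasure PZ Acont = 0" by (simp only: AE_not_cont_iff)
  with Acont show False by contradiction
qed

lemma KL_P_Q_infinite:
  assumes "emeasure PZ Acont \<noteq> 0"
  shows "KL P Q = \<infinity>"
proof -
  have "\<not> absolutely_continuous Q P"
    using graph_without_atoms_null_Q graph_without_atoms_not_null_P[OF assms]
    unfolding absolutely_continuous_def by auto
  then show ?thesis unfolding KL_def by simp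
qed

lemma KL_P_Q:
  "KL P Q = (if emeasure PZ Acont = 0
     then enn2ereal (\<integral>\<^sup>+ z. e2ennreal (MI MX MY (K z)) * indicator Aatomic z \<partial>PZ) else \<infinity>)"
  using KL_P_Q_finite KL_P_Q_infinite by simp

lemma KL_P_Q_degenerate:
  assumes A0: "emeasure PZ A0 = 1"
  shows "KL P Q = 0"
proof -
  interpret PZ: prob_space PZ using PZ_prob by (simp add: space_prob_algebra)
  have "AE z in PZ. z \<in> A0"
    using A0_sets A0 by (intro PZ.AE_in_set_eq_1[THEN iffD2]) (simp_all add: PZ.emeasure_eq_measure)
  then have A0_AE: "AE z in PZ. z \<in> A0 \<and> z \<notin> Acont"
    by (rule eventually_mono) (use A0_null_atoms Acont_iff in force)
  then have "emeasure PZ Acont = 0"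
    by (subst AE_not_cont_iff[symmetric]) (rule eventually_mono, auto)
  moreover have "(\<integral>\<^sup>+ z. e2ennreal (MI MX MY (K z)) * indicator Aatomic z \<partial>PZ) = (\<integral>\<^sup>+ z. 0 \<partial>PZ)"
    by (rule nn_integral_cong_AE) (use A0_AE in \<open>eventually_elim, simp add: Aatomic_eq\<close>)
  ultimately show ?thesis by (simp add: KL_P_Q_finite zero_ennreal.rep_eq)
qed

end

theorem theorem3p3:
  fixes M :: "'w measure"
    and MX :: "'x measure" and MY :: "'y measure" and MZ :: "'z measure"
    and X :: "'w \<Rightarrow> 'x" and Y :: "'w \<Rightarrow> 'y" and Z :: "'w \<Rightarrow> 'z"
    and T :: "'y \<times> 'z \<Rightarrow> 'x"
    and fX :: "'x \<Rightarrow> 'px::polish_space" and fY :: "'y \<Rightarrow> 'py::polish_space"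
    and fZ :: "'z \<Rightarrow> 'pz::polish_space"
    and K :: "'z \<Rightarrow> ('x \<times> 'y) measure"
  assumes "prob_space M"
    and stdX: "standard_via MX fX" and stdY: "standard_via MY fY" and stdZ: "standard_via MZ fZ"
    and Y_rv: "Y \<in> M \<rightarrow>\<^sub>M MY" and Z_rv: "Z \<in> M \<rightarrow>\<^sub>M MZ"
    and T_meas: "T \<in> MY \<Otimes>\<^sub>M MZ \<rightarrow>\<^sub>M MX"
    and X_def: "\<forall>\<omega>\<in>space M. X \<omega> = T (Y \<omega>, Z \<omega>)"
    \<comment> \<open>K is a regular conditional distribution of (X,Y) given Z, i.e. the disintegration
        of P_XYZ with respect to P_Z\<close>
    and K_meas: "K \<in> MZ \<rightarrow>\<^sub>M prob_algebra (MX \<Otimes>\<^sub>M MY)"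
    and K_disint: "\<forall>B\<in>sets (MX \<Otimes>\<^sub>M MY). \<forall>C\<in>sets MZ.
        emeasure M {\<omega>\<in>space M. (X \<omega>, Y \<omega>) \<in> B \<and> Z \<omega> \<in> C}
          = (\<integral>\<^sup>+ z. emeasure (K z) B * indicator C z \<partial>distr M MZ Z)"
  defines "PZ \<equiv> distr M MZ Z"
    and "A0 \<equiv> {z\<in>space MZ. \<exists>x\<in>space MX. emeasure (distr (K z) MX fst) {x} = 1}"
    and "Aatomic \<equiv> {z\<in>space MZ. \<not> (\<exists>x\<in>space MX. emeasure (distr (K z) MX fst) {x} = 1) \<and>
           (\<exists>B\<in>sets MX. countable B \<and> \<not> (\<exists>x. B = {x}) \<and> emeasure (distr (K z) MX fst) B = 1)}"
    and "Acont \<equiv> {z\<in>space MZ. \<exists>B\<in>sets MX. emeasure (distr (K z) MX fst) B > 0 \<and>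
           (\<forall>x\<in>B. emeasure (distr (K z) MX fst) {x} = 0)}"
    and "CMI \<equiv> KL (distr M ((MX \<Otimes>\<^sub>M MY) \<Otimes>\<^sub>M MZ) (\<lambda>\<omega>. ((X \<omega>, Y \<omega>), Z \<omega>)))
                  (cond_prod_measure MX MY MZ (distr M MZ Z) K)"
  shows "A0 \<in> sets MZ \<and> Aatomic \<in> sets MZ \<and> Acont \<in> sets MZ \<and>
         CMI = (if emeasure PZ Acont = 0
                then enn2ereal (\<integral>\<^sup>+ z. e2ennreal (MI MX MY (K z)) * indicator Aatomic z \<partial>PZ)
                else \<infinity>) \<and>
         (emeasure PZ A0 = 1 \<longrightarrow> CMI = 0)"
proof -
  interpret deterministic_channel M MX MY MZ X Y Z T fX K
    by (rule deterministic_channel.intro) fact+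
  show ?thesis
    unfolding PZ_def A0_def Aatomic_def Acont_def CMI_def
    using A0_sets Aatomic_sets Acont_sets KL_P_Q KL_P_Q_degenerate by blast
qed

end
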